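(* Let $A$ be an $n\times n$ Hermitian matrix ($n\ge2$) with eigenvalues $\lambda_1\ge\dots\ge\lambda_n$, and for $k=1,\dots,n$ let $\mu_{k,1}\ge\dots\ge\mu_{k,n-1}$ be the eigenvalues of $A_k$. Then for all $1\le\ell\le r\le n-1$, $$(r-\ell+1)\lambda_\ell+(n-1)\sum_{j=\ell}^r\lambda_{j+1}\le\sum_{k=1}^n\sum_{j=\ell}^r\mu_{k,j}\le(n-1)\sum_{j=\ell}^r\lambda_j+(r-\ell+1)\lambda_{r+1}.$$
   Context: For an $n\times n$ matrix $A$ and $k\in\{1,\dots,n\}$, $A_k$ denotes the $(n-1)\times(n-1)$ principal submatrix obtained by deleting the $k$-th row and $k$-th column of $A$. *)

theory Defs
  imports Complex_Main "Jordan_Normal_Form.Char_Poly" "Jordan_Normal_Form.Determinant"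
begin

definition hermitian_mat :: "nat \<Rightarrow> complex mat \<Rightarrow> bool" where
  "hermitian_mat n A \<longleftrightarrow> A \<in> carrier_mat n n \<and>
     (\<forall>i<n. \<forall>j<n. A $$ (i, j) = cnj (A $$ (j, i)))"

definition sorted_eigenvalues :: "nat \<Rightarrow> complex mat \<Rightarrow> (nat \<Rightarrow> real) \<Rightarrow> bool" where
  "sorted_eigenvalues m B lam \<longleftrightarrow> B \<in> carrier_mat m m \<and>
     (\<forall>i j. 1 \<le> i \<and> i \<le> j \<and> j \<le> m \<longrightarrow> lam j \<le> lam i) \<and>
     char_poly B = (\<Prod>i=1..m. [:- complex_of_real (lam i), 1:])"

end

(*
  Let u_1, ..., u_n be an orthonormal eigenbasis of A and, for each k, let Z_k be an isometry
  onto the coordinate hyperplane e_k^perp that diagonalizes A_k.  For the window l..r of size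
  m = r - l + 1 choose an m-dimensional subspace V of e_k^perp spanned by eigenvectors of A_k
  of index at most r and orthogonal to u_1, ..., u_(l-1).  The trace of A on V equals both
  sum_j mu_(k,j) s_j and sum_i lambda_i q_i, where s_j and q_i are the squared lengths of the
  projections of the two eigenbases onto V: they lie in [0,1], have total mass m, and
  q_i <= 1 - |u_i(k)|^2 because V is orthogonal to e_k.  The bathtub principle then gives
    sum_(j=l..r) mu_(k,j) <= sum_(i=l..r) (lambda_i - lambda_(r+1)) (1 - |u_i(k)|^2) + m lambda_(r+1),
  and summing over k with sum_k |u_i(k)|^2 = 1 yields the upper bound.  The lower bound is
  symmetric: V is spanned by eigenvectors of A_k of index at least l and is orthogonal to
  u_(r+2), ..., u_n.
*)

theory Submission
  imports Defs "Jordan_Normal_Form.Schur_Decomposition"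
begin

lemma mat_adjoint_carrier [simp]: "mat_adjoint A \<in> carrier_mat (dim_col A) (dim_row A)"
  unfolding mat_adjoint_def by auto

lemma mat_adjoint_dim [simp]:
  "dim_row (mat_adjoint A) = dim_col A" "dim_col (mat_adjoint A) = dim_row A"
  unfolding mat_adjoint_def by auto

lemma mat_adjoint_carrier_mat [simp]: "A \<in> carrier_mat n m \<Longrightarrow> mat_adjoint A \<in> carrier_mat m n"
  unfolding carrier_mat_def by simp

lemma index_mat_adjoint [simp]:
  "i < dim_col A \<Longrightarrow> j < dim_row A \<Longrightarrow> mat_adjoint A $$ (i, j) = conjugate (A $$ (j, i))"
  unfolding mat_adjoint_def by (simp add: mat_of_rows_index)

lemma mat_adjoint_adjoint [simp]: "mat_adjoint (mat_adjoint A) = A"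
  by (rule eq_matI) auto

lemma mat_adjoint_mult:
  fixes A B :: "'a :: conjugatable_field mat"
  assumes "dim_col A = dim_row B"
  shows "mat_adjoint (A * B) = mat_adjoint B * mat_adjoint A"
  using assms
  by (intro eq_matI) (auto simp: scalar_prod_def sum_conjugate conjugate_dist_mul mult.commute)

lemma assoc_mult_mat_dim:
  "dim_col A = dim_row B \<Longrightarrow> dim_col B = dim_row C \<Longrightarrow> A * B * C = A * (B * C)"
  by (rule assoc_mult_mat[of A "dim_row A" "dim_col A" B "dim_col B" C "dim_col C"]) auto

lemma mult_mat_cancel_left:
  fixes A B X :: "'a :: semiring_1 mat"
  assumes "A * B = 1\<^sub>m k" "dim_col A = dim_row B" "dim_col B = dim_row X"
  shows "A * (B * X) = X"
proof -
  have "dim_row X = k"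
    using assms(3) arg_cong[OF assms(1), of dim_col] by simp
  then have "1\<^sub>m k * X = X"
    using left_mult_one_mat[of X k "dim_col X"] by auto
  then show ?thesis
    using assms by (simp flip: assoc_mult_mat_dim)
qed

lemma index_mult_mat_sum:
  assumes "X \<in> carrier_mat n p" "Y \<in> carrier_mat p q" "i < n" "j < q"
  shows "(X * Y) $$ (i, j) = (\<Sum>t<p. X $$ (i, t) * Y $$ (t, j))"
  using assms by (simp add: scalar_prod_def lessThan_atLeast0)

lemma index_adjoint_mult_mat:
  fixes X Y :: "complex mat"
  assumes "X \<in> carrier_mat n p" "Y \<in> carrier_mat n q" "a < p" "b < q"
  shows "(mat_adjoint X * Y) $$ (a, b) = (\<Sum>i<n. cnj (X $$ (i, a)) * Y $$ (i, b))"
  using assms by (simp add: scalar_prod_def lessThan_atLeast0)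

definition isometry_mat :: "nat \<Rightarrow> nat \<Rightarrow> 'a :: conjugatable_field mat \<Rightarrow> bool" where
  "isometry_mat n m U \<longleftrightarrow> U \<in> carrier_mat n m \<and> mat_adjoint U * U = 1\<^sub>m m"

lemma isometry_mult:
  assumes X: "isometry_mat n m X" and Y: "isometry_mat m p Y"
  shows "isometry_mat n p (X * Y)"
proof -
  have carr: "X \<in> carrier_mat n m" "Y \<in> carrier_mat m p"
    and XX: "mat_adjoint X * X = 1\<^sub>m m" and YY: "mat_adjoint Y * Y = 1\<^sub>m p"
    using X Y unfolding isometry_mat_def by auto
  have "mat_adjoint (X * Y) * (X * Y) = 1\<^sub>m p"
    using carr by (simp add: mat_adjoint_mult assoc_mult_mat_dim mult_mat_cancel_left[OF XX] YY)
  then show ?thesis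
    using carr unfolding isometry_mat_def by auto
qed

lemma unitary_mult_adjoint:
  assumes "isometry_mat n n U"
  shows "U * mat_adjoint U = 1\<^sub>m n"
  using assms mat_mult_left_right_inverse[of "mat_adjoint U" n U] unfolding isometry_mat_def
  by (metis mat_adjoint_carrier carrier_matD)

lemma unitary_adjoint:
  fixes U :: "complex mat"
  assumes "isometry_mat n n U"
  shows "isometry_mat n n (mat_adjoint U)"
  using assms unitary_mult_adjoint[OF assms] unfolding isometry_mat_def by simp

section \<open>Orthonormal extension\<close>

definition orthonormal :: "'a :: conjugatable_field vec list \<Rightarrow> bool" where
  "orthonormal vs \<longleftrightarrow>
     (\<forall>i<length vs. \<forall>j<length vs. vs ! i \<bullet>c vs ! j = (if i = j then 1 else 0))"

lemma isometry_mat_of_cols: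
  fixes ws :: "complex vec list"
  assumes "set ws \<subseteq> carrier_vec d" "orthonormal ws"
  shows "isometry_mat d (length ws) (mat_of_cols d ws)"
  unfolding isometry_mat_def
proof (intro conjI eq_matI)
  fix i j assume ij: "i < dim_row (1\<^sub>m (length ws))" "j < dim_col (1\<^sub>m (length ws))"
  then have "ws ! i \<in> carrier_vec d" "ws ! j \<in> carrier_vec d"
    using assms(1) by auto
  then have "(mat_adjoint (mat_of_cols d ws) * mat_of_cols d ws) $$ (i, j) = ws ! j \<bullet>c ws ! i"
    using ij by (simp add: scalar_prod_def mat_of_cols_index mult.commute)
  then show "(mat_adjoint (mat_of_cols d ws) * mat_of_cols d ws) $$ (i, j) = 1\<^sub>m (length ws) $$ (i, j)"
    using assms(2) ij unfolding orthonormal_def by auto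
qed auto

lemma exists_orthogonal_vec:
  fixes ks :: "complex vec list"
  assumes ks: "set ks \<subseteq> carrier_vec d" and len: "length ks < d"
  shows "\<exists>v \<in> carrier_vec d. v \<noteq> 0\<^sub>v d \<and> (\<forall>k\<in>set ks. k \<bullet> v = 0)"
proof -
  define M where
    "M = mat\<^sub>r d d (\<lambda>i. if i = d - 1 then 0\<^sub>v d else if i < length ks then ks ! i else 0\<^sub>v d)"
  have M: "M \<in> carrier_mat d d"
    unfolding M_def by auto
  have rows: "row M i = ks ! i" if "i < length ks" for i
    unfolding M_def using that len ks by (subst row_mat_of_row_fun) (auto simp: nth_mem subsetD)
  have "det M = 0"
    unfolding M_def by (rule det_row_0) (use len ks in \<open>auto simp: nth_mem subsetD\<close>)
  then obtain v where v: "v \<in> carrier_vec d" "v \<noteq> 0\<^sub>v d" "M *\<^sub>v v = 0\<^sub>v d"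
    using det_0_iff_vec_prod_zero_field[OF M] by auto
  have "ks ! i \<bullet> v = 0" if "i < length ks" for i
    using arg_cong[OF v(3), of "\<lambda>w. w $ i"] that len M by (simp add: rows)
  then show ?thesis
    using v by (metis in_set_conv_nth)
qed

lemma exists_unit_multiple:
  fixes v :: "complex vec"
  assumes "v \<in> carrier_vec d" "v \<noteq> 0\<^sub>v d"
  shows "\<exists>c. (c \<cdot>\<^sub>v v) \<bullet>c (c \<cdot>\<^sub>v v) = 1"
proof -
  have "v \<bullet>c v > 0"
    using assms by simp
  then obtain x where x: "v \<bullet>c v = of_real x" "x > 0"
    by (auto simp: less_complex_def complex_eq_iff intro: exI[of _ "Re (v \<bullet>c v)"])
  define c where "c = complex_of_real (1 / sqrt x)"
  have "(c \<cdot>\<^sub>v v) \<bullet>c (c \<cdot>\<^sub>v v) = c * cnj c * (v \<bullet>c v)"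
    using assms(1) by (simp add: scalar_prod_def sum_distrib_left algebra_simps)
  also have "\<dots> = 1"
    unfolding c_def x(1) using x(2) by (simp flip: of_real_mult)
  finally show ?thesis ..
qed

lemma exists_orthonormal_snoc:
  fixes ks vs :: "complex vec list"
  assumes ks: "set ks \<subseteq> carrier_vec d" and vs: "set vs \<subseteq> carrier_vec d" "orthonormal vs"
    and len: "length ks + length vs < d"
  shows "\<exists>y \<in> carrier_vec d. orthonormal (vs @ [y]) \<and> (\<forall>k\<in>set ks. k \<bullet> y = 0)"
proof -
  \<comment> \<open>\<open>y \<bullet>c v = conjugate v \<bullet> y\<close>: the bilinear \<open>\<bullet>\<close> with \<open>conjugate vs\<close> tests orthogonality to \<open>vs\<close>\<close>
  let ?ks = "ks @ map conjugate vs"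
  have "set ?ks \<subseteq> carrier_vec d"
    using ks vs by auto
  then obtain v where v: "v \<in> carrier_vec d" "v \<noteq> 0\<^sub>v d" "\<forall>k\<in>set ?ks. k \<bullet> v = 0"
    using exists_orthogonal_vec[of ?ks d] len by auto
  obtain c where c: "(c \<cdot>\<^sub>v v) \<bullet>c (c \<cdot>\<^sub>v v) = 1"
    using exists_unit_multiple[OF v(1,2)] by blast
  define y where "y = c \<cdot>\<^sub>v v"
  have y: "y \<in> carrier_vec d"
    unfolding y_def using v by auto
  have ky: "k \<bullet> y = 0" if "k \<in> set ?ks" for k
    unfolding y_def using that v ks vs by (auto simp: scalar_prod_smult_distrib[OF _ v(1)])
  have vs_y: "vs ! a \<bullet>c y = 0" "y \<bullet>c vs ! a = 0" if "a < length vs" for a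
  proof -
    have va: "vs ! a \<in> carrier_vec d"
      using vs(1) that nth_mem by blast
    show "y \<bullet>c vs ! a = 0"
      using ky[of "conjugate (vs ! a)"] comm_scalar_prod[OF carrier_vec_conjugate[OF va] y] that
      by simp
    then show "vs ! a \<bullet>c y = 0"
      using conjugate_conjugate_sprod[OF y va] conjugate_vec_sprod_comm[OF va y] by simp
  qed
  have "orthonormal (vs @ [y])"
    using vs(2) vs_y c unfolding orthonormal_def y_def by (auto simp: nth_append less_Suc_eq)
  then show ?thesis
    using y ky by auto
qed

lemma orthonormal_extend:
  fixes ks vs :: "complex vec list"
  assumes "set ks \<subseteq> carrier_vec d" "set vs \<subseteq> carrier_vec d" "orthonormal vs"
    "\<forall>k\<in>set ks. \<forall>v\<in>set vs. k \<bullet> v = 0" "length ks + length vs + t \<le> d"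
  shows "\<exists>ws. set ws \<subseteq> carrier_vec d \<and> orthonormal ws \<and> length ws = length vs + t \<and>
     take (length vs) ws = vs \<and> (\<forall>k\<in>set ks. \<forall>w\<in>set ws. k \<bullet> w = 0)"
  using assms
proof (induction t arbitrary: vs)
  case 0
  then show ?case by auto
next
  case (Suc t)
  obtain y where y: "y \<in> carrier_vec d" "orthonormal (vs @ [y])" "\<forall>k\<in>set ks. k \<bullet> y = 0"
    using exists_orthonormal_snoc[OF Suc.prems(1-3)] Suc.prems(5) by auto
  then obtain ws where ws: "set ws \<subseteq> carrier_vec d" "orthonormal ws"
    "length ws = length (vs @ [y]) + t" "take (length (vs @ [y])) ws = vs @ [y]"
    "\<forall>k\<in>set ks. \<forall>w\<in>set ws. k \<bullet> w = 0"
    using Suc.IH[OF Suc.prems(1), of "vs @ [y]"] Suc.prems(2,4,5) by auto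
  have "take (length vs) ws = vs"
    using arg_cong[OF ws(4), of "take (length vs)"] by (simp add: min_def)
  then show ?case
    using ws by auto
qed

lemma exists_isometry_orthogonal:
  fixes ks :: "complex vec list"
  assumes "set ks \<subseteq> carrier_vec d" "length ks + m \<le> d"
  shows "\<exists>C. isometry_mat d m C \<and> (\<forall>k\<in>set ks. \<forall>a<m. k \<bullet> col C a = 0)"
proof -
  obtain ws where ws: "set ws \<subseteq> carrier_vec d" "orthonormal ws" "length ws = m"
    "\<forall>k\<in>set ks. \<forall>w\<in>set ws. k \<bullet> w = 0"
    using orthonormal_extend[OF assms(1), of "[]" m] assms(2) unfolding orthonormal_def by auto
  then show ?thesis
    using isometry_mat_of_cols[OF ws(1,2)]
    by (intro exI[of _ "mat_of_cols d ws"]) (auto simp: nth_mem subsetD)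
qed

section \<open>Unitary diagonalization of Hermitian matrices\<close>

lemma hermitian_mat_iff_adjoint:
  "hermitian_mat n A \<longleftrightarrow> A \<in> carrier_mat n n \<and> mat_adjoint A = A"
proof (cases "A \<in> carrier_mat n n")
  case True
  then have "mat_adjoint A = A \<longleftrightarrow> (\<forall>i<n. \<forall>j<n. A $$ (i, j) = cnj (A $$ (j, i)))"
    by (simp add: mat_eq_iff) (metis)
  then show ?thesis
    unfolding hermitian_mat_def using True by simp
qed (simp add: hermitian_mat_def)

lemma hermitian_mat_conj:
  fixes W :: "complex mat"
  assumes A: "hermitian_mat n A" and W: "W \<in> carrier_mat n m"
  shows "hermitian_mat m (mat_adjoint W * A * W)"
proof -
  have A': "A \<in> carrier_mat n n" "mat_adjoint A = A"
    using A unfolding hermitian_mat_iff_adjoint by auto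
  have "mat_adjoint (mat_adjoint W * A * W) = mat_adjoint W * A * W"
    using A' W by (simp add: mat_adjoint_mult assoc_mult_mat_dim)
  then show ?thesis
    using A' W unfolding hermitian_mat_iff_adjoint by auto
qed

lemma unitary_similar_mat:
  fixes W :: "complex mat"
  assumes W: "isometry_mat n n W" and A: "A \<in> carrier_mat n n"
  shows "similar_mat A (mat_adjoint W * A * W)"
proof (rule similar_matI)
  have W': "W \<in> carrier_mat n n" "mat_adjoint W * W = 1\<^sub>m n" "W * mat_adjoint W = 1\<^sub>m n"
    using W unitary_mult_adjoint[OF W] unfolding isometry_mat_def by auto
  show "{A, mat_adjoint W * A * W, W, mat_adjoint W} \<subseteq> carrier_mat n n"
    using A W' by auto
  show "W * mat_adjoint W = 1\<^sub>m n" "mat_adjoint W * W = 1\<^sub>m n"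
    using W' by auto
  have "W * (mat_adjoint W * A * W) * mat_adjoint W = W * (mat_adjoint W * (A * (W * mat_adjoint W)))"
    using A W' by (simp add: assoc_mult_mat_dim)
  also have "\<dots> = A"
    using A W' by (simp add: mult_mat_cancel_left[OF W'(3)])
  finally show "A = W * (mat_adjoint W * A * W) * mat_adjoint W" ..
qed

lemma exists_unit_eigenvector:
  fixes A :: "complex mat"
  assumes A: "A \<in> carrier_mat n n" and e: "poly (char_poly A) e = 0"
  shows "\<exists>u \<in> carrier_vec n. u \<bullet>c u = 1 \<and> A *\<^sub>v u = e \<cdot>\<^sub>v u"
proof -
  obtain v where v: "v \<in> carrier_vec n" "v \<noteq> 0\<^sub>v n" "A *\<^sub>v v = e \<cdot>\<^sub>v v"
    using e eigenvalue_root_char_poly[OF A] A unfolding eigenvalue_def eigenvector_def by auto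
  obtain c where c: "(c \<cdot>\<^sub>v v) \<bullet>c (c \<cdot>\<^sub>v v) = 1"
    using exists_unit_multiple[OF v(1,2)] by blast
  have "A *\<^sub>v (c \<cdot>\<^sub>v v) = e \<cdot>\<^sub>v (c \<cdot>\<^sub>v v)"
    using v A by (simp add: mult_mat_vec smult_smult_assoc mult.commute)
  then show ?thesis
    using v c by (intro bexI[of _ "c \<cdot>\<^sub>v v"]) auto
qed

lemma exists_unitary_first_col:
  fixes u :: "complex vec"
  assumes u: "u \<in> carrier_vec (Suc n)" "u \<bullet>c u = 1"
  shows "\<exists>W. isometry_mat (Suc n) (Suc n) W \<and> col W 0 = u"
proof -
  have "orthonormal [u]"
    using u unfolding orthonormal_def by auto
  then obtain ws where ws: "set ws \<subseteq> carrier_vec (Suc n)" "orthonormal ws"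
    "length ws = Suc n" "take 1 ws = [u]"
    using orthonormal_extend[of "[]" "Suc n" "[u]" n] u by auto
  then have "ws ! 0 = u"
    by (metis nth_take One_nat_def lessI nth_Cons_0)
  then have "col (mat_of_cols (Suc n) ws) 0 = u"
    using ws(3) u(1) by simp
  then show ?thesis
    using isometry_mat_of_cols[OF ws(1,2)] ws(3) by auto
qed

lemma unitary_deflation:
  fixes W :: "complex mat"
  assumes A: "hermitian_mat (Suc n) A" and W: "isometry_mat (Suc n) (Suc n) W"
    and eig: "A *\<^sub>v col W 0 = e \<cdot>\<^sub>v col W 0"
  shows "\<exists>B. hermitian_mat n B \<and>
    mat_adjoint W * A * W = four_block_mat (mat 1 1 (\<lambda>_. e)) (0\<^sub>m 1 n) (0\<^sub>m n 1) B"
proof -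
  define A' where "A' = mat_adjoint W * A * W"
  have W': "W \<in> carrier_mat (Suc n) (Suc n)" "mat_adjoint W * W = 1\<^sub>m (Suc n)"
    and Ac: "A \<in> carrier_mat (Suc n) (Suc n)"
    using W A unfolding isometry_mat_def hermitian_mat_def by auto
  have herm: "hermitian_mat (Suc n) A'"
    unfolding A'_def by (rule hermitian_mat_conj[OF A W'(1)])
  have col0: "A' $$ (i, 0) = (if i = 0 then e else 0)" if i: "i < Suc n" for i
  proof -
    have orth: "row (mat_adjoint W) i \<bullet> col W 0 = (if i = 0 then 1 else 0)"
      using arg_cong[OF W'(2), of "\<lambda>M. M $$ (i, 0)"] i W'(1) by simp
    have "A' $$ (i, 0) = row (mat_adjoint W) i \<bullet> (A *\<^sub>v col W 0)"
      unfolding A'_def using i W' Ac by (simp add: assoc_mult_mat_dim mult_mat_vec_def)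
    also have "\<dots> = e * (row (mat_adjoint W) i \<bullet> col W 0)"
      unfolding eig using i W' by (simp add: scalar_prod_smult_distrib[of _ "Suc n"])
    finally show ?thesis
      unfolding orth by simp
  qed
  have herm': "A' $$ (i, j) = cnj (A' $$ (j, i))" if "i < Suc n" "j < Suc n" for i j
    using herm that unfolding hermitian_mat_def by blast
  have row0: "A' $$ (0, Suc j) = 0" if "j < n" for j
    using herm'[of 0 "Suc j"] col0[of "Suc j"] that by simp
  define B where "B = mat n n (\<lambda>(i, j). A' $$ (Suc i, Suc j))"
  have "hermitian_mat n B"
    unfolding hermitian_mat_def B_def by (auto intro!: herm')
  moreover have "A' = four_block_mat (mat 1 1 (\<lambda>_. e)) (0\<^sub>m 1 n) (0\<^sub>m n 1) B"
  proof (rule eq_matI)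
    fix i j assume "i < dim_row (four_block_mat (mat 1 1 (\<lambda>_. e)) (0\<^sub>m 1 n) (0\<^sub>m n 1) B)"
      "j < dim_col (four_block_mat (mat 1 1 (\<lambda>_. e)) (0\<^sub>m 1 n) (0\<^sub>m n 1) B)"
    then have ij: "i < Suc n" "j < Suc n"
      unfolding B_def by auto
    show "A' $$ (i, j) = four_block_mat (mat 1 1 (\<lambda>_. e)) (0\<^sub>m 1 n) (0\<^sub>m n 1) B $$ (i, j)"
      using col0 row0 ij unfolding B_def by (cases i; cases j) auto
  qed (use W' Ac in \<open>auto simp: A'_def B_def\<close>)
  ultimately show ?thesis
    unfolding A'_def by blast
qed

lemma block_diag_unitary_conj:
  fixes U E B :: "complex mat"
  assumes U: "isometry_mat n n U" and B: "B \<in> carrier_mat n n"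
  defines "V \<equiv> four_block_mat (1\<^sub>m 1) (0\<^sub>m 1 n) (0\<^sub>m n 1) U"
  shows "isometry_mat (Suc n) (Suc n) V"
    and "E \<in> carrier_mat 1 1 \<Longrightarrow> mat_adjoint V * four_block_mat E (0\<^sub>m 1 n) (0\<^sub>m n 1) B * V
       = four_block_mat E (0\<^sub>m 1 n) (0\<^sub>m n 1) (mat_adjoint U * B * U)"
proof -
  have U': "U \<in> carrier_mat n n" "mat_adjoint U * U = 1\<^sub>m n"
    using U unfolding isometry_mat_def by auto
  have adjV: "mat_adjoint V = four_block_mat (1\<^sub>m 1) (0\<^sub>m 1 n) (0\<^sub>m n 1) (mat_adjoint U)"
    using U' by (intro eq_matI) (auto simp: V_def)
  have mult: "four_block_mat X (0\<^sub>m 1 n) (0\<^sub>m n 1) Y * four_block_mat X' (0\<^sub>m 1 n) (0\<^sub>m n 1) Y'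
      = four_block_mat (X * X') (0\<^sub>m 1 n) (0\<^sub>m n 1) (Y * Y')"
    if "X \<in> carrier_mat 1 1" "X' \<in> carrier_mat 1 1" "Y \<in> carrier_mat n n" "Y' \<in> carrier_mat n n"
    for X X' Y Y' :: "complex mat"
    using that by (subst mult_four_block_mat[of _ 1 1 _ n _ n _ _ 1 _ n]) auto
  have "mat_adjoint V * V
      = four_block_mat (1\<^sub>m 1 * 1\<^sub>m 1) (0\<^sub>m 1 n) (0\<^sub>m n 1) (mat_adjoint U * U)"
    unfolding adjV unfolding V_def by (rule mult) (use U' in auto)
  then show "isometry_mat (Suc n) (Suc n) V"
    using U' unfolding isometry_mat_def V_def by auto
  assume E: "E \<in> carrier_mat 1 1"
  have "mat_adjoint V * four_block_mat E (0\<^sub>m 1 n) (0\<^sub>m n 1) B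
      = four_block_mat (1\<^sub>m 1 * E) (0\<^sub>m 1 n) (0\<^sub>m n 1) (mat_adjoint U * B)"
    unfolding adjV by (rule mult) (use U' E B in auto)
  moreover have "four_block_mat (1\<^sub>m 1 * E) (0\<^sub>m 1 n) (0\<^sub>m n 1) (mat_adjoint U * B) * V
      = four_block_mat (1\<^sub>m 1 * E * 1\<^sub>m 1) (0\<^sub>m 1 n) (0\<^sub>m n 1) (mat_adjoint U * B * U)"
    unfolding V_def by (rule mult) (use U' E B in auto)
  ultimately show "mat_adjoint V * four_block_mat E (0\<^sub>m 1 n) (0\<^sub>m n 1) B * V
       = four_block_mat E (0\<^sub>m 1 n) (0\<^sub>m n 1) (mat_adjoint U * B * U)"
    using E by simp
qed

lemma char_poly_unitary_deflation:
  fixes W A B :: "complex mat"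
  assumes W: "isometry_mat (Suc n) (Suc n) W" and A: "A \<in> carrier_mat (Suc n) (Suc n)"
    and B: "B \<in> carrier_mat n n"
    and WAW: "mat_adjoint W * A * W = four_block_mat (mat 1 1 (\<lambda>_. e)) (0\<^sub>m 1 n) (0\<^sub>m n 1) B"
  shows "char_poly A = [:- e, 1:] * char_poly B"
proof -
  have "char_poly (mat 1 1 (\<lambda>_. e)) = [:- e, 1:]"
    using char_poly_upper_triangular[of "mat 1 1 (\<lambda>_. e)" 1]
    by (auto simp: upper_triangular_def diag_mat_def)
  then show ?thesis
    using char_poly_similar[OF unitary_similar_mat[OF W A]] B
      char_poly_four_block_zeros_col[of "mat 1 1 (\<lambda>_. e)" "0\<^sub>m 1 n" n B]
    unfolding WAW by auto
qed

theorem hermitian_unitary_diagonalization: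
  assumes "hermitian_mat n A" "char_poly A = (\<Prod>e\<leftarrow>es. [:- e, 1:])" "length es = n"
  shows "\<exists>U. isometry_mat n n U \<and> mat_adjoint U * A * U = mat_diag n (\<lambda>i. es ! i)"
  using assms
proof (induction es arbitrary: n A)
  case Nil
  then show ?case
    unfolding hermitian_mat_def isometry_mat_def
    by (intro exI[of _ "1\<^sub>m 0"]) (auto simp: mat_diag_def intro!: eq_matI)
next
  case (Cons e es)
  then obtain n' where n: "n = Suc n'"
    by (cases n) auto
  have A: "A \<in> carrier_mat n n"
    using Cons.prems(1) unfolding hermitian_mat_def by auto
  obtain u where u: "u \<in> carrier_vec n" "u \<bullet>c u = 1" "A *\<^sub>v u = e \<cdot>\<^sub>v u"
    using exists_unit_eigenvector[OF A] Cons.prems(2) by auto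
  obtain W where W: "isometry_mat n n W" "col W 0 = u"
    using exists_unitary_first_col u n by blast
  let ?E = "mat 1 1 (\<lambda>_. e)"
  obtain B where B: "hermitian_mat n' B"
    and WAW: "mat_adjoint W * A * W = four_block_mat ?E (0\<^sub>m 1 n') (0\<^sub>m n' 1) B"
    using unitary_deflation[of n' A W e] Cons.prems(1) W u n by auto
  have B': "B \<in> carrier_mat n' n'"
    using B unfolding hermitian_mat_def by auto
  have "[:- e, 1:] * char_poly B = [:- e, 1:] * (\<Prod>e\<leftarrow>es. [:- e, 1:])"
    using char_poly_unitary_deflation[OF W(1)[unfolded n] _ B' WAW[unfolded n]] A Cons.prems(2) n
    by simp
  then have "char_poly B = (\<Prod>e\<leftarrow>es. [:- e, 1:])"
    by (metis mult_left_cancel pCons_eq_0_iff one_neq_zero)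
  then obtain U3 where U3: "isometry_mat n' n' U3"
    "mat_adjoint U3 * B * U3 = mat_diag n' (\<lambda>i. es ! i)"
    using Cons.IH[OF B] Cons.prems(3) n by auto
  define V where "V = four_block_mat (1\<^sub>m 1) (0\<^sub>m 1 n') (0\<^sub>m n' 1) U3"
  note V = block_diag_unitary_conj[OF U3(1) B', folded V_def]
  have "W \<in> carrier_mat n n" "V \<in> carrier_mat n n"
    using W(1) V(1) n unfolding isometry_mat_def by auto
  then have "mat_adjoint (W * V) * A * (W * V) = mat_adjoint V * (mat_adjoint W * A * W) * V"
    using A by (simp add: mat_adjoint_mult assoc_mult_mat_dim)
  also have "\<dots> = four_block_mat ?E (0\<^sub>m 1 n') (0\<^sub>m n' 1) (mat_diag n' (\<lambda>i. es ! i))"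
    using V(2)[OF mat_carrier] WAW U3(2) by simp
  also have "\<dots> = mat_diag n (\<lambda>i. (e # es) ! i)"
    unfolding n by (rule eq_matI) (auto simp: mat_diag_def nth_Cons')
  finally show ?case
    using isometry_mult[OF W(1)] V(1) n by auto
qed

lemma sorted_eigenvalues_antimono:
  "sorted_eigenvalues n A lam \<Longrightarrow> antimono_on {..<n} (\<lambda>i. lam (Suc i))"
  unfolding sorted_eigenvalues_def by (auto intro!: monotone_onI)

lemma sorted_eigenvalues_unitary_diagonalization:
  assumes "hermitian_mat n A" "sorted_eigenvalues n A lam"
  shows "\<exists>U. isometry_mat n n U \<and> mat_adjoint U * A * U = mat_diag n (\<lambda>i. of_real (lam (Suc i)))"
proof -
  let ?es = "map (\<lambda>i. complex_of_real (lam (Suc i))) [0..<n]"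
  have "(\<Prod>i=1..n. [:- complex_of_real (lam i), 1:]) = (\<Prod>e\<leftarrow>?es. [:- e, 1:])"
    using prod.distinct_set_conv_list[of "[0..<n]" "\<lambda>i. [:- complex_of_real (lam (Suc i)), 1:]"]
    by (simp add: prod.atLeast1_atMost_eq atLeast0LessThan o_def)
  then have "char_poly A = (\<Prod>e\<leftarrow>?es. [:- e, 1:])"
    using assms(2) unfolding sorted_eigenvalues_def by simp
  then obtain U where "isometry_mat n n U" "mat_adjoint U * A * U = mat_diag n (\<lambda>i. ?es ! i)"
    using hermitian_unitary_diagonalization[OF assms(1)] by fastforce
  moreover have "mat_diag n (\<lambda>i. ?es ! i) = mat_diag n (\<lambda>i. of_real (lam (Suc i)))"
    by (auto simp: mat_diag_def intro!: eq_matI)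
  ultimately show ?thesis
    by auto
qed

section \<open>Principal submatrices as compressions\<close>

lemma hermitian_mat_delete:
  assumes "hermitian_mat n A" "k < n"
  shows "hermitian_mat (n - 1) (mat_delete A k k)"
proof -
  have herm: "A $$ (i, j) = cnj (A $$ (j, i))" if "i < n" "j < n" for i j
    using assms(1) that unfolding hermitian_mat_def by blast
  have "A \<in> carrier_mat n n"
    using assms(1) unfolding hermitian_mat_def by blast
  then show ?thesis
    unfolding hermitian_mat_def mat_delete_def by (auto intro!: herm)
qed

definition coordinate_embedding :: "nat \<Rightarrow> nat \<Rightarrow> complex mat" where
  "coordinate_embedding n k = mat n (n - 1) (\<lambda>(i, j). if i = insert_index k j then 1 else 0)"

lemma coordinate_embedding_carrier: "coordinate_embedding n k \<in> carrier_mat n (n - 1)"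
  unfolding coordinate_embedding_def by simp

lemma insert_index_bounds:
  assumes "k < n" "j < n - 1"
  shows "insert_index k j < n" "k \<noteq> insert_index k j"
  using assms unfolding insert_index_def by auto

lemma coordinate_embedding_row_zero:
  "k < n \<Longrightarrow> j < n - 1 \<Longrightarrow> coordinate_embedding n k $$ (k, j) = 0"
  using insert_index_bounds[of k n j] unfolding coordinate_embedding_def by simp

lemma coordinate_embedding_isometry:
  assumes k: "k < n"
  shows "isometry_mat n (n - 1) (coordinate_embedding n k)"
  unfolding isometry_mat_def
proof (intro conjI coordinate_embedding_carrier eq_matI)
  let ?E = "coordinate_embedding n k"
  fix a b assume "a < dim_row (1\<^sub>m (n - 1))" "b < dim_col (1\<^sub>m (n - 1))"
  then have ab: "a < n - 1" "b < n - 1" by auto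
  have "(mat_adjoint ?E * ?E) $$ (a, b)
      = (\<Sum>i<n. if i = insert_index k a then (if a = b then 1 else 0) else 0)"
    unfolding index_adjoint_mult_mat[OF coordinate_embedding_carrier coordinate_embedding_carrier ab]
    by (rule sum.cong) (use ab in \<open>auto simp: coordinate_embedding_def insert_index_def\<close>)
  then show "(mat_adjoint ?E * ?E) $$ (a, b) = 1\<^sub>m (n - 1) $$ (a, b)"
    using ab insert_index_bounds(1)[OF k ab(1)] by simp
qed (use coordinate_embedding_carrier in auto)

lemma coordinate_embedding_compression:
  assumes A: "A \<in> carrier_mat n n" and k: "k < n"
  shows "mat_adjoint (coordinate_embedding n k) * A * coordinate_embedding n k = mat_delete A k k"
proof (rule eq_matI)
  define E where "E = coordinate_embedding n k"
  have E: "E \<in> carrier_mat n (n - 1)"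
    unfolding E_def by (rule coordinate_embedding_carrier)
  fix a b assume "a < dim_row (mat_delete A k k)" "b < dim_col (mat_delete A k k)"
  then have ab: "a < n - 1" "b < n - 1"
    using A by auto
  have AE: "(A * E) $$ (i, b) = A $$ (i, insert_index k b)" if "i < n" for i
  proof -
    have "(A * E) $$ (i, b) = (\<Sum>t<n. if t = insert_index k b then A $$ (i, t) else 0)"
      unfolding index_mult_mat_sum[OF A E that ab(2)]
      by (rule sum.cong) (use ab in \<open>auto simp: E_def coordinate_embedding_def\<close>)
    then show ?thesis
      using insert_index_bounds(1)[OF k ab(2)] by simp
  qed
  have "(mat_adjoint E * (A * E)) $$ (a, b)
      = (\<Sum>i<n. if i = insert_index k a then A $$ (i, insert_index k b) else 0)"
    unfolding index_adjoint_mult_mat[OF E mult_carrier_mat[OF A E] ab]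
    by (rule sum.cong) (use ab AE in \<open>auto simp: E_def coordinate_embedding_def\<close>)
  also have "\<dots> = mat_delete A k k $$ (a, b)"
    using insert_index_bounds(1)[OF k ab(1)] mat_delete_index[of A "n - 1" k k a b] A ab k by simp
  finally show "(mat_adjoint E * A * E) $$ (a, b) = mat_delete A k k $$ (a, b)"
    using A E by (simp add: assoc_mult_mat_dim)
qed (use A coordinate_embedding_carrier in auto)

lemma principal_submatrix_eigenbasis:
  assumes A: "hermitian_mat n A" and k: "k < n"
    and mu: "sorted_eigenvalues (n - 1) (mat_delete A k k) mu"
  shows "\<exists>Z. isometry_mat n (n - 1) Z
    \<and> mat_adjoint Z * A * Z = mat_diag (n - 1) (\<lambda>j. of_real (mu (Suc j)))
    \<and> (\<forall>j<n - 1. Z $$ (k, j) = 0)"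
proof -
  have A': "A \<in> carrier_mat n n"
    using A unfolding hermitian_mat_def by simp
  define E where "E = coordinate_embedding n k"
  have E: "isometry_mat n (n - 1) E" "mat_adjoint E * A * E = mat_delete A k k"
    "\<forall>j<n - 1. E $$ (k, j) = 0"
    unfolding E_def using coordinate_embedding_isometry coordinate_embedding_compression
      coordinate_embedding_row_zero A' k by auto
  obtain V where V: "isometry_mat (n - 1) (n - 1) V"
    "mat_adjoint V * mat_delete A k k * V = mat_diag (n - 1) (\<lambda>j. of_real (mu (Suc j)))"
    using sorted_eigenvalues_unitary_diagonalization[OF hermitian_mat_delete[OF A k] mu] by blast
  have carr: "E \<in> carrier_mat n (n - 1)" "V \<in> carrier_mat (n - 1) (n - 1)"
    using E(1) V(1) unfolding isometry_mat_def by auto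
  have "mat_adjoint (E * V) * A * (E * V) = mat_adjoint V * (mat_adjoint E * A * E) * V"
    using carr A' by (simp add: mat_adjoint_mult assoc_mult_mat_dim)
  moreover have "(E * V) $$ (k, j) = 0" if "j < n - 1" for j
    unfolding index_mult_mat_sum[OF carr k that] using E(3) that by simp
  ultimately show ?thesis
    using isometry_mult[OF E(1) V(1)] E(2) V(2) by (intro exI[of _ "E * V"]) auto
qed

definition row_sqnorm :: "complex mat \<Rightarrow> nat \<Rightarrow> real" where
  "row_sqnorm X i = (\<Sum>a<dim_col X. (cmod (X $$ (i, a)))\<^sup>2)"

lemma row_sqnorm_nonneg: "0 \<le> row_sqnorm X i"
  unfolding row_sqnorm_def by (simp add: sum_nonneg)

lemma cnj_mult_self: "cnj z * z = complex_of_real ((cmod z)\<^sup>2)"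
  by (metis complex_norm_square mult.commute)

lemma isometry_orthonormal_cols:
  fixes X :: "complex mat"
  assumes X: "isometry_mat n m X"
  shows "orthonormal (cols X)"
  unfolding orthonormal_def
proof (intro allI impI)
  fix a b assume ab: "a < length (cols X)" "b < length (cols X)"
  have carr: "X \<in> carrier_mat n m" and XX: "mat_adjoint X * X = 1\<^sub>m m"
    using X unfolding isometry_mat_def by auto
  have "cols X ! a \<bullet>c cols X ! b = (mat_adjoint X * X) $$ (b, a)"
    using ab carr by (simp add: index_adjoint_mult_mat[OF carr carr] scalar_prod_def
        lessThan_atLeast0 mult.commute)
  then show "cols X ! a \<bullet>c cols X ! b = (if a = b then 1 else 0)"
    using ab carr unfolding XX by auto
qed

lemma isometry_col_sqnorm:
  fixes X :: "complex mat"
  assumes X: "isometry_mat n m X" and a: "a < m"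
  shows "(\<Sum>i<n. (cmod (X $$ (i, a)))\<^sup>2) = 1"
proof -
  have carr: "X \<in> carrier_mat n m" and XX: "mat_adjoint X * X = 1\<^sub>m m"
    using X unfolding isometry_mat_def by auto
  have "(mat_adjoint X * X) $$ (a, a) = (\<Sum>i<n. cnj (X $$ (i, a)) * X $$ (i, a))"
    by (rule index_adjoint_mult_mat[OF carr carr a a])
  also have "\<dots> = complex_of_real (\<Sum>i<n. (cmod (X $$ (i, a)))\<^sup>2)"
    by (simp only: cnj_mult_self of_real_sum)
  finally show ?thesis
    using a unfolding XX by (metis index_one_mat(1) of_real_eq_1_iff)
qed

lemma isometry_sum_row_sqnorm:
  fixes X :: "complex mat"
  assumes X: "isometry_mat n m X"
  shows "(\<Sum>i<n. row_sqnorm X i) = real m"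
proof -
  have "dim_col X = m"
    using X unfolding isometry_mat_def by auto
  then have "(\<Sum>i<n. row_sqnorm X i) = (\<Sum>a<m. \<Sum>i<n. (cmod (X $$ (i, a)))\<^sup>2)"
    unfolding row_sqnorm_def by (simp add: sum.swap[of _ "{..<n}"])
  also have "\<dots> = real m"
    using isometry_col_sqnorm[OF X] by simp
  finally show ?thesis .
qed

text \<open>The diagonal entry \<open>s\<close> of the orthogonal projection \<open>P = X X\<^sup>*\<close> satisfies
  \<open>s = (P P)\<^sub>i\<^sub>i = \<Sum>\<^sub>t |P\<^sub>i\<^sub>t|\<^sup>2 \<ge> s\<^sup>2\<close>.\<close>
lemma isometry_row_sqnorm_le_1:
  fixes X :: "complex mat"
  assumes X: "isometry_mat n m X" and i: "i < n"
  shows "row_sqnorm X i \<le> 1"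
proof -
  have carr: "X \<in> carrier_mat n m" and XX: "mat_adjoint X * X = 1\<^sub>m m"
    using X unfolding isometry_mat_def by auto
  define P where "P = X * mat_adjoint X"
  have P: "P \<in> carrier_mat n n"
    unfolding P_def using carr by simp
  have "P * P = X * (mat_adjoint X * (X * mat_adjoint X))"
    unfolding P_def using carr by (simp add: assoc_mult_mat_dim)
  then have PP: "P * P = P"
    unfolding P_def using carr by (simp add: mult_mat_cancel_left[OF XX])
  have Pit: "P $$ (i, t) = (\<Sum>a<m. X $$ (i, a) * cnj (X $$ (t, a)))" if "t < n" for t
    unfolding P_def using carr i that by (simp add: scalar_prod_def lessThan_atLeast0)
  have Pti: "P $$ (t, i) * P $$ (i, t) = complex_of_real ((cmod (P $$ (i, t)))\<^sup>2)" if "t < n" for t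
  proof -
    have "P $$ (t, i) = cnj (P $$ (i, t))"
      unfolding P_def using carr i that
      by (simp add: scalar_prod_def lessThan_atLeast0 cnj_sum mult.commute)
    then show ?thesis
      by (simp only: cnj_mult_self)
  qed
  define s where "s = row_sqnorm X i"
  have Pii: "P $$ (i, i) = complex_of_real s"
    unfolding Pit[OF i] s_def row_sqnorm_def of_real_sum using carr
    by (simp only: complex_norm_square[symmetric] carrier_matD)
  have "complex_of_real s = (\<Sum>t<n. P $$ (t, i) * P $$ (i, t))"
    using arg_cong[OF PP, of "\<lambda>M. M $$ (i, i)"] unfolding index_mult_mat_sum[OF P P i i] Pii
    by (simp add: mult.commute)
  also have "\<dots> = complex_of_real (\<Sum>t<n. (cmod (P $$ (i, t)))\<^sup>2)"
    unfolding of_real_sum by (rule sum.cong) (simp_all add: Pti)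
  finally have "s = (\<Sum>t<n. (cmod (P $$ (i, t)))\<^sup>2)"
    by (simp only: of_real_eq_iff)
  also have "\<dots> \<ge> (cmod (P $$ (i, i)))\<^sup>2"
    by (rule member_le_sum) (use i in auto)
  finally have "s * s \<le> s * 1"
    unfolding Pii by (simp add: power2_eq_square)
  then show ?thesis
    unfolding s_def using row_sqnorm_nonneg[of X i]
    by (cases "row_sqnorm X i = 0") (auto simp: mult_le_cancel_left)
qed

lemma row_sqnorm_add_orthogonal_le_1:
  fixes G :: "complex mat"
  assumes G: "isometry_mat n m G" and v: "v \<in> carrier_vec n" "v \<bullet>c v = 1"
    and orth: "\<forall>a<m. col G a \<bullet>c v = 0" and i: "i < n"
  shows "row_sqnorm G i + (cmod (v $ i))\<^sup>2 \<le> 1"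
proof -
  have carr: "G \<in> carrier_mat n m"
    using G unfolding isometry_mat_def by auto
  have orth': "v \<bullet>c col G a = 0" if "a < m" for a
    using orth that carr v conjugate_conjugate_sprod[of v n "col G a"]
      comm_scalar_prod[of "col G a" n "conjugate v"] by auto
  let ?ws = "cols G @ [v]"
  have "orthonormal ?ws"
    using isometry_orthonormal_cols[OF G] orth orth' v carr unfolding orthonormal_def
    by (auto simp: nth_append less_Suc_eq)
  moreover have "set ?ws \<subseteq> carrier_vec n"
    using v carr by (auto simp: cols_def)
  ultimately have "isometry_mat n (Suc m) (mat_of_cols n ?ws)"
    using isometry_mat_of_cols[of ?ws n] carr by simp
  moreover have "row_sqnorm (mat_of_cols n ?ws) i = row_sqnorm G i + (cmod (v $ i))\<^sup>2"
    unfolding row_sqnorm_def using carr i v by (simp add: mat_of_cols_index nth_append cols_def)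
  ultimately show ?thesis
    using isometry_row_sqnorm_le_1[OF _ i] by metis
qed

lemma index_adjoint_diag_mult:
  assumes C: "C \<in> carrier_mat p m" and a: "a < m"
  shows "(mat_adjoint C * mat_diag p (\<lambda>j. complex_of_real (f j)) * C) $$ (a, a)
    = complex_of_real (\<Sum>j<p. f j * (cmod (C $$ (j, a)))\<^sup>2)"
proof -
  have "mat_adjoint C * mat_diag p (\<lambda>j. complex_of_real (f j))
      = mat m p (\<lambda>(i, j). cnj (C $$ (j, i)) * complex_of_real (f j))"
    using C by (subst mat_diag_mult_right[of _ m]) (auto intro!: eq_matI)
  then show ?thesis
    using C a by (simp add: scalar_prod_def lessThan_atLeast0 of_real_sum complex_norm_square[symmetric] ac_simps)
qed

lemma weighted_row_sqnorm_eq: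
  assumes C: "C \<in> carrier_mat p m" and G: "G \<in> carrier_mat n m"
    and eq: "mat_adjoint C * mat_diag p (\<lambda>j. complex_of_real (f j)) * C
      = mat_adjoint G * mat_diag n (\<lambda>i. complex_of_real (g i)) * G"
  shows "(\<Sum>j<p. f j * row_sqnorm C j) = (\<Sum>i<n. g i * row_sqnorm G i)"
proof -
  have "(\<Sum>j<p. f j * (cmod (C $$ (j, a)))\<^sup>2) = (\<Sum>i<n. g i * (cmod (G $$ (i, a)))\<^sup>2)" if "a < m" for a
    using arg_cong[OF eq, of "\<lambda>M. M $$ (a, a)"]
    unfolding index_adjoint_diag_mult[OF C that] index_adjoint_diag_mult[OF G that]
    by (simp only: of_real_eq_iff)
  then show ?thesis
    using C G unfolding row_sqnorm_def
    by (simp add: sum_distrib_left sum.swap[of _ "{..<m}"])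
qed

section \<open>Trace of a compression on a subspace\<close>

lemma exists_isometry_vanishing_rows:
  fixes Y :: "complex mat"
  assumes Y: "Y \<in> carrier_mat n p" and J: "J \<subseteq> {..<p}" and I: "I \<subseteq> {..<n}"
    and card: "card J + card I + m \<le> p"
  shows "\<exists>C. isometry_mat p m C \<and> (\<forall>j\<in>J. \<forall>a<m. C $$ (j, a) = 0)
    \<and> (\<forall>i\<in>I. \<forall>a<m. (Y * C) $$ (i, a) = 0)"
proof -
  have fin: "finite J" "finite I"
    using J I by (auto intro: finite_subset)
  define ks where
    "ks = map (unit_vec p) (sorted_list_of_set J) @ map (row Y) (sorted_list_of_set I)"
  have "set ks \<subseteq> carrier_vec p" "length ks + m \<le> p"
    unfolding ks_def using Y card by auto
  then obtain C where C: "isometry_mat p m C" and orth: "\<forall>k\<in>set ks. \<forall>a<m. k \<bullet> col C a = 0"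
    using exists_isometry_orthogonal by blast
  have carr: "C \<in> carrier_mat p m"
    using C unfolding isometry_mat_def by simp
  have "C $$ (j, a) = unit_vec p j \<bullet> col C a" if "j \<in> J" "a < m" for j a
    using that J carr by auto
  moreover have "(Y * C) $$ (i, a) = row Y i \<bullet> col C a" if "i \<in> I" "a < m" for i a
    using that I Y carr by auto
  ultimately show ?thesis
    using C orth fin unfolding ks_def by auto
qed

lemma compressed_row_sqnorm_le:
  fixes U Z C :: "complex mat"
  assumes U: "isometry_mat n n U" and Z: "Z \<in> carrier_mat n p" and C: "C \<in> carrier_mat p m"
    and k: "k < n" "\<forall>j<p. Z $$ (k, j) = 0"
    and G: "isometry_mat n m (mat_adjoint U * Z * C)" and i: "i < n"
  shows "row_sqnorm (mat_adjoint U * Z * C) i + (cmod (U $$ (k, i)))\<^sup>2 \<le> 1"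
proof -
  define G' where "G' = mat_adjoint U * Z * C"
  have carr: "U \<in> carrier_mat n n" "G' \<in> carrier_mat n m"
    using U G unfolding isometry_mat_def G'_def by auto
  define v where "v = col (mat_adjoint U) k"
  have v: "v \<in> carrier_vec n" "v \<bullet>c v = 1"
    using isometry_orthonormal_cols[OF unitary_adjoint[OF U]] carr k
    unfolding orthonormal_def v_def by auto
  have UG: "U * G' = Z * C"
    unfolding G'_def using carr Z C
    by (simp add: assoc_mult_mat_dim mult_mat_cancel_left[OF unitary_mult_adjoint[OF U]])
  have "col G' a \<bullet>c v = 0" if a: "a < m" for a
  proof -
    have "col G' a \<bullet>c v = (\<Sum>i<n. U $$ (k, i) * G' $$ (i, a))"
      unfolding v_def using carr k a by (simp add: scalar_prod_def lessThan_atLeast0 mult.commute)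
    also have "\<dots> = (Z * C) $$ (k, a)"
      unfolding UG[symmetric] by (rule index_mult_mat_sum[OF carr k(1) a, symmetric])
    also have "\<dots> = 0"
      unfolding index_mult_mat_sum[OF Z C k(1) a] using k(2) by simp
    finally show ?thesis .
  qed
  then have "row_sqnorm G' i + (cmod (v $ i))\<^sup>2 \<le> 1"
    using row_sqnorm_add_orthogonal_le_1[OF G[folded G'_def] v _ i] by simp
  then show ?thesis
    unfolding G'_def v_def using carr i k by simp
qed

lemma compressed_diag_eq:
  fixes A U Z C :: "complex mat"
  assumes A: "A \<in> carrier_mat n n"
    and U: "isometry_mat n n U" "mat_adjoint U * A * U = mat_diag n (\<lambda>i. of_real (lam i))"
    and Z: "Z \<in> carrier_mat n p" "mat_adjoint Z * A * Z = mat_diag p (\<lambda>j. of_real (mu j))"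
    and C: "C \<in> carrier_mat p m"
  shows "mat_adjoint (mat_adjoint U * Z * C) * mat_diag n (\<lambda>i. of_real (lam i))
      * (mat_adjoint U * Z * C) = mat_adjoint C * mat_diag p (\<lambda>j. of_real (mu j)) * C"
proof -
  have "U \<in> carrier_mat n n"
    using U(1) unfolding isometry_mat_def by simp
  then show ?thesis
    unfolding U(2)[symmetric] Z(2)[symmetric] using A Z(1) C
    by (simp add: mat_adjoint_mult assoc_mult_mat_dim
        mult_mat_cancel_left[OF unitary_mult_adjoint[OF U(1)]])
qed

text \<open>The weights are \<open>s\<^sub>j = |P z\<^sub>j|\<^sup>2\<close> and \<open>q\<^sub>i = |P u\<^sub>i|\<^sup>2\<close> for the columns \<open>z\<^sub>j\<close> of \<open>Z\<close>
  and \<open>u\<^sub>i\<close> of \<open>U\<close>, where \<open>P\<close> projects onto an \<open>m\<close>-dimensional subspace of the range of \<open>Z\<close>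
  orthogonal to the \<open>z\<^sub>j\<close> with \<open>j \<in> J\<close> and the \<open>u\<^sub>i\<close> with \<open>i \<in> I\<close>; both weighted sums
  are the trace of \<open>P A\<close>.\<close>
lemma compression_weights:
  fixes A U Z :: "complex mat" and lam mu :: "nat \<Rightarrow> real"
  assumes A: "A \<in> carrier_mat n n"
    and U: "isometry_mat n n U" "mat_adjoint U * A * U = mat_diag n (\<lambda>i. of_real (lam i))"
    and Z: "isometry_mat n p Z" "mat_adjoint Z * A * Z = mat_diag p (\<lambda>j. of_real (mu j))"
    and k: "k < n" "\<forall>j<p. Z $$ (k, j) = 0"
    and J: "J \<subseteq> {..<p}" and I: "I \<subseteq> {..<n}" and card: "card J + card I + m \<le> p"
  shows "\<exists>s q. (\<forall>j<p. 0 \<le> s j \<and> s j \<le> 1) \<and> (\<forall>j\<in>J. s j = 0) \<and> (\<Sum>j<p. s j) = real m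
    \<and> (\<forall>i<n. 0 \<le> q i \<and> q i \<le> 1 - (cmod (U $$ (k, i)))\<^sup>2) \<and> (\<forall>i\<in>I. q i = 0)
    \<and> (\<Sum>i<n. q i) = real m \<and> (\<Sum>j<p. mu j * s j) = (\<Sum>i<n. lam i * q i)"
proof -
  have Zc: "Z \<in> carrier_mat n p"
    using Z(1) unfolding isometry_mat_def by simp
  have Y: "isometry_mat n p (mat_adjoint U * Z)"
    by (rule isometry_mult[OF unitary_adjoint[OF U(1)] Z(1)])
  then obtain C where C: "isometry_mat p m C" and CJ: "\<forall>j\<in>J. \<forall>a<m. C $$ (j, a) = 0"
    and GI: "\<forall>i\<in>I. \<forall>a<m. (mat_adjoint U * Z * C) $$ (i, a) = 0"
    using exists_isometry_vanishing_rows[OF _ J I card] unfolding isometry_mat_def by blast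
  define G where "G = mat_adjoint U * Z * C"
  have G: "isometry_mat n m G"
    unfolding G_def by (rule isometry_mult[OF Y C])
  have Cc: "C \<in> carrier_mat p m" and Gc: "G \<in> carrier_mat n m"
    using C G unfolding isometry_mat_def by auto
  show ?thesis
  proof (intro exI conjI)
    show "\<forall>j<p. 0 \<le> row_sqnorm C j \<and> row_sqnorm C j \<le> 1"
      using row_sqnorm_nonneg isometry_row_sqnorm_le_1[OF C] by blast
    show "\<forall>j\<in>J. row_sqnorm C j = 0"
      using CJ Cc unfolding row_sqnorm_def by (auto intro!: sum.neutral)
    show "(\<Sum>j<p. row_sqnorm C j) = real m"
      by (rule isometry_sum_row_sqnorm[OF C])
    show "\<forall>i<n. 0 \<le> row_sqnorm G i \<and> row_sqnorm G i \<le> 1 - (cmod (U $$ (k, i)))\<^sup>2"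
      using row_sqnorm_nonneg compressed_row_sqnorm_le[OF U(1) Zc Cc k G[unfolded G_def]]
      unfolding G_def by (simp add: algebra_simps)
    show "\<forall>i\<in>I. row_sqnorm G i = 0"
      using GI Gc unfolding row_sqnorm_def G_def by (auto intro!: sum.neutral)
    show "(\<Sum>i<n. row_sqnorm G i) = real m"
      by (rule isometry_sum_row_sqnorm[OF G])
    show "(\<Sum>j<p. mu j * row_sqnorm C j) = (\<Sum>i<n. lam i * row_sqnorm G i)"
      using weighted_row_sqnorm_eq[OF Cc Gc] compressed_diag_eq[OF A U Zc Z(2) Cc]
      unfolding G_def by simp
  qed
qed

section \<open>The bathtub principle\<close>

lemma bathtub_upper:
  fixes f q b :: "'a \<Rightarrow> real"
  assumes N: "finite N" "W \<subseteq> N" and q: "\<forall>i\<in>N. 0 \<le> q i" "\<forall>i\<in>W. q i \<le> b i"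
    and mass: "(\<Sum>i\<in>N. q i) = m"
    and f: "\<forall>i\<in>W. c \<le> f i" "\<forall>i\<in>N - W. q i = 0 \<or> f i \<le> c"
  shows "(\<Sum>i\<in>N. f i * q i) \<le> (\<Sum>i\<in>W. (f i - c) * b i) + m * c"
proof -
  have split: "(\<Sum>i\<in>N. (f i - c) * q i) = (\<Sum>i\<in>W. (f i - c) * q i) + (\<Sum>i\<in>N - W. (f i - c) * q i)"
    using N by (simp add: sum.subset_diff)
  have "(f i - c) * q i \<le> 0" if "i \<in> N - W" for i
  proof -
    have "0 \<le> q i" "q i = 0 \<or> f i - c \<le> 0"
      using q(1) f(2) that by auto
    then show ?thesis
      by (cases "q i = 0") (simp_all add: mult_nonpos_nonneg)
  qed
  then have outside: "(\<Sum>i\<in>N - W. (f i - c) * q i) \<le> 0"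
    by (rule sum_nonpos)
  have inside: "(\<Sum>i\<in>W. (f i - c) * q i) \<le> (\<Sum>i\<in>W. (f i - c) * b i)"
    using q(2) f(1) by (intro sum_mono mult_left_mono) auto
  have "(\<Sum>i\<in>N. (f i - c) * q i) = (\<Sum>i\<in>N. f i * q i) - (\<Sum>i\<in>N. c * q i)"
    by (simp add: left_diff_distrib sum_subtractf)
  also have "(\<Sum>i\<in>N. c * q i) = m * c"
    unfolding sum_distrib_left[symmetric] mass by simp
  finally show ?thesis
    using split outside inside by linarith
qed

lemma bathtub_lower:
  fixes f q b :: "'a \<Rightarrow> real"
  assumes N: "finite N" "W \<subseteq> N" and q: "\<forall>i\<in>N. 0 \<le> q i" "\<forall>i\<in>W. q i \<le> b i"
    and mass: "(\<Sum>i\<in>N. q i) = m"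
    and f: "\<forall>i\<in>W. f i \<le> c" "\<forall>i\<in>N - W. q i = 0 \<or> c \<le> f i"
  shows "(\<Sum>i\<in>W. (f i - c) * b i) + m * c \<le> (\<Sum>i\<in>N. f i * q i)"
proof -
  have "(\<Sum>i\<in>N. - f i * q i) \<le> (\<Sum>i\<in>W. (- f i - - c) * b i) + m * - c"
    by (rule bathtub_upper[OF N q mass]) (use f in auto)
  moreover have "(\<Sum>i\<in>N. - f i * q i) = - (\<Sum>i\<in>N. f i * q i)"
    "(\<Sum>i\<in>W. (- f i - - c) * b i) = - (\<Sum>i\<in>W. (f i - c) * b i)"
    by (simp_all add: sum_negf[symmetric] algebra_simps)
  ultimately show ?thesis
    by linarith
qed

section \<open>Window sums of eigenvalues of principal submatrices\<close>

lemma compression_window_upper: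
  fixes A U Z :: "complex mat" and lam mu :: "nat \<Rightarrow> real"
  assumes A: "A \<in> carrier_mat n n"
    and U: "isometry_mat n n U" "mat_adjoint U * A * U = mat_diag n (\<lambda>i. of_real (lam i))"
    and Z: "isometry_mat n (n - 1) Z" "mat_adjoint Z * A * Z = mat_diag (n - 1) (\<lambda>j. of_real (mu j))"
    and k: "k < n" "\<forall>j<n - 1. Z $$ (k, j) = 0"
    and lam: "antimono_on {..<n} lam" and mu: "antimono_on {..<n - 1} mu"
    and lr: "l < r" "r \<le> n - 1"
  shows "(\<Sum>j\<in>{l..<r}. mu j)
    \<le> (\<Sum>i\<in>{l..<r}. (lam i - lam r) * (1 - (cmod (U $$ (k, i)))\<^sup>2)) + real (r - l) * lam r"
proof -
  let ?b = "\<lambda>i. 1 - (cmod (U $$ (k, i)))\<^sup>2"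
  have sets: "{r..<n - 1} \<subseteq> {..<n - 1}" "{..<l} \<subseteq> {..<n}"
    "card {r..<n - 1} + card {..<l} + (r - l) \<le> n - 1"
    using lr by auto
  obtain s q where s: "\<forall>j<n - 1. 0 \<le> s j \<and> s j \<le> 1" "\<forall>j\<in>{r..<n - 1}. s j = 0"
      "(\<Sum>j<n - 1. s j) = real (r - l)"
    and q: "\<forall>i<n. 0 \<le> q i \<and> q i \<le> ?b i" "\<forall>i\<in>{..<l}. q i = 0" "(\<Sum>i<n. q i) = real (r - l)"
    and eq: "(\<Sum>j<n - 1. mu j * s j) = (\<Sum>i<n. lam i * q i)"
    using compression_weights[OF A U Z k sets] by blast
  have "(\<Sum>j\<in>{l..<r}. (mu j - mu l) * 1) + real (r - l) * mu l \<le> (\<Sum>j<n - 1. mu j * s j)"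
    by (rule bathtub_lower) (use s lr monotone_onD[OF mu] in auto)
  moreover have "(\<Sum>i<n. lam i * q i) \<le> (\<Sum>i\<in>{l..<r}. (lam i - lam r) * ?b i) + real (r - l) * lam r"
    by (rule bathtub_upper) (use q lr monotone_onD[OF lam] in auto)
  ultimately show ?thesis
    using eq by (simp add: sum_subtractf)
qed

lemma compression_window_lower:
  fixes A U Z :: "complex mat" and lam mu :: "nat \<Rightarrow> real"
  assumes A: "A \<in> carrier_mat n n"
    and U: "isometry_mat n n U" "mat_adjoint U * A * U = mat_diag n (\<lambda>i. of_real (lam i))"
    and Z: "isometry_mat n (n - 1) Z" "mat_adjoint Z * A * Z = mat_diag (n - 1) (\<lambda>j. of_real (mu j))"
    and k: "k < n" "\<forall>j<n - 1. Z $$ (k, j) = 0"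
    and lam: "antimono_on {..<n} lam" and mu: "antimono_on {..<n - 1} mu"
    and lr: "l < r" "r \<le> n - 1"
  shows "(\<Sum>i\<in>{Suc l..r}. (lam i - lam l) * (1 - (cmod (U $$ (k, i)))\<^sup>2)) + real (r - l) * lam l
    \<le> (\<Sum>j\<in>{l..<r}. mu j)"
proof -
  let ?b = "\<lambda>i. 1 - (cmod (U $$ (k, i)))\<^sup>2"
  have sets: "{..<l} \<subseteq> {..<n - 1}" "{Suc r..<n} \<subseteq> {..<n}"
    "card {..<l} + card {Suc r..<n} + (r - l) \<le> n - 1"
    using lr by auto
  obtain s q where s: "\<forall>j<n - 1. 0 \<le> s j \<and> s j \<le> 1" "\<forall>j\<in>{..<l}. s j = 0"
      "(\<Sum>j<n - 1. s j) = real (r - l)"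
    and q: "\<forall>i<n. 0 \<le> q i \<and> q i \<le> ?b i" "\<forall>i\<in>{Suc r..<n}. q i = 0" "(\<Sum>i<n. q i) = real (r - l)"
    and eq: "(\<Sum>j<n - 1. mu j * s j) = (\<Sum>i<n. lam i * q i)"
    using compression_weights[OF A U Z k sets] by blast
  have "(\<Sum>i\<in>{Suc l..r}. (lam i - lam l) * ?b i) + real (r - l) * lam l \<le> (\<Sum>i<n. lam i * q i)"
    by (rule bathtub_lower) (use q lr monotone_onD[OF lam] in auto)
  moreover have "(\<Sum>j<n - 1. mu j * s j) \<le> (\<Sum>j\<in>{l..<r}. (mu j - mu (r - 1)) * 1) + real (r - l) * mu (r - 1)"
    by (rule bathtub_upper) (use s lr monotone_onD[OF mu] in auto)
  ultimately show ?thesis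
    using eq by (simp add: sum_subtractf)
qed

lemma principal_submatrix_window_bounds:
  fixes A U :: "complex mat" and lam mu :: "nat \<Rightarrow> real"
  assumes A: "hermitian_mat n A" "sorted_eigenvalues n A lam"
    and U: "isometry_mat n n U" "mat_adjoint U * A * U = mat_diag n (\<lambda>i. of_real (lam (Suc i)))"
    and k: "k < n" and mu: "sorted_eigenvalues (n - 1) (mat_delete A k k) mu"
    and lr: "1 \<le> l" "l \<le> r" "r \<le> n - 1"
  defines "w \<equiv> \<lambda>i. (cmod (U $$ (k, i)))\<^sup>2"
  shows "(\<Sum>j=l..r. mu j)
      \<le> (\<Sum>j=l..r. (lam j - lam (r + 1)) * (1 - w (j - 1))) + real (r - l + 1) * lam (r + 1)"
    and "(\<Sum>j=l..r. (lam (j + 1) - lam l) * (1 - w j)) + real (r - l + 1) * lam l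
      \<le> (\<Sum>j=l..r. mu j)"
proof -
  obtain Z where Z: "isometry_mat n (n - 1) Z"
    "mat_adjoint Z * A * Z = mat_diag (n - 1) (\<lambda>j. of_real (mu (Suc j)))"
    "\<forall>j<n - 1. Z $$ (k, j) = 0"
    using principal_submatrix_eigenbasis[OF A(1) k mu] by blast
  have A': "A \<in> carrier_mat n n"
    using A(1) unfolding hermitian_mat_def by simp
  have lr': "l - 1 < r" "r \<le> n - 1"
    using lr by auto
  note hyps = A' U Z(1,2) k Z(3) sorted_eigenvalues_antimono[OF A(2)]
    sorted_eigenvalues_antimono[OF mu] lr'
  note bounds = compression_window_upper[OF hyps] compression_window_lower[OF hyps]
  have shift: "(\<Sum>j=l..r. g j) = (\<Sum>j\<in>{l - 1..<r}. g (Suc j))" for g :: "nat \<Rightarrow> real"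
    using sum.shift_bounds_Suc_ivl[of g "l - 1" r] lr(1) by (simp add: atLeastLessThanSuc_atLeastAtMost)
  have len: "real (r - (l - 1)) = real (r - l + 1)" "Suc (l - 1) = l"
    using lr by auto
  show "(\<Sum>j=l..r. mu j)
      \<le> (\<Sum>j=l..r. (lam j - lam (r + 1)) * (1 - w (j - 1))) + real (r - l + 1) * lam (r + 1)"
    using bounds(1) unfolding len by (simp add: shift w_def)
  show "(\<Sum>j=l..r. (lam (j + 1) - lam l) * (1 - w j)) + real (r - l + 1) * lam l
      \<le> (\<Sum>j=l..r. mu j)"
    using bounds(2) unfolding len by (simp add: shift w_def)
qed

lemma sum_window_average:
  fixes f :: "nat \<Rightarrow> real" and w :: "nat \<Rightarrow> nat \<Rightarrow> real"
  assumes S: "finite S" and w: "\<forall>i\<in>S. (\<Sum>k<n. w k i) = 1"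
  shows "(\<Sum>k<n. (\<Sum>i\<in>S. (f i - c) * (1 - w k i)) + real (card S) * c)
    = (real n - 1) * sum f S + real (card S) * c"
proof -
  have inner: "(\<Sum>k<n. (f i - c) * (1 - w k i)) = (f i - c) * (real n - 1)" if "i \<in> S" for i
    using w that by (simp add: sum_distrib_left[symmetric] sum_subtractf)
  have "(\<Sum>k<n. \<Sum>i\<in>S. (f i - c) * (1 - w k i)) = (\<Sum>i\<in>S. (f i - c) * (real n - 1))"
    by (subst sum.swap) (rule sum.cong, simp_all add: inner)
  also have "\<dots> = (sum f S - real (card S) * c) * (real n - 1)"
    by (simp add: sum_distrib_right[symmetric] sum_subtractf)
  finally show ?thesis
    by (simp add: sum.distrib algebra_simps)
qed

theorem theorem3p5:
  fixes n :: nat and A :: "complex mat" and lam :: "nat \<Rightarrow> real"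
    and mu :: "nat \<Rightarrow> nat \<Rightarrow> real"
  assumes "n \<ge> 2"
    and "hermitian_mat n A"
    and "sorted_eigenvalues n A lam"
    and "\<And>k. 1 \<le> k \<Longrightarrow> k \<le> n \<Longrightarrow>
           sorted_eigenvalues (n - 1) (mat_delete A (k - 1) (k - 1)) (mu k)"
    and "1 \<le> l" and "l \<le> r" and "r \<le> n - 1"
  shows "real (r - l + 1) * lam l + real (n - 1) * (\<Sum>j=l..r. lam (j + 1))
           \<le> (\<Sum>k=1..n. \<Sum>j=l..r. mu k j)
       \<and> (\<Sum>k=1..n. \<Sum>j=l..r. mu k j)
           \<le> real (n - 1) * (\<Sum>j=l..r. lam j) + real (r - l + 1) * lam (r + 1)"
proof -
  obtain U where U: "isometry_mat n n U"
      "mat_adjoint U * A * U = mat_diag n (\<lambda>i. of_real (lam (Suc i)))"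
    using sorted_eigenvalues_unitary_diagonalization[OF assms(2,3)] by blast
  define w where "w k i = (cmod (U $$ (k, i)))\<^sup>2" for k i
  have upper_k: "(\<Sum>j=l..r. mu (Suc k) j) \<le> (\<Sum>j=l..r. (lam j - lam (r + 1)) * (1 - w k (j - 1)))
      + real (card {l..r}) * lam (r + 1)"
    and lower_k: "(\<Sum>j=l..r. (lam (j + 1) - lam l) * (1 - w k j)) + real (card {l..r}) * lam l
      \<le> (\<Sum>j=l..r. mu (Suc k) j)" if "k < n" for k
    using principal_submatrix_window_bounds[OF assms(2,3) U that _ assms(5-7)] assms(4)[of "Suc k"]
      that assms(6) unfolding w_def by (simp_all add: Suc_diff_le)
  have cols: "\<forall>j\<in>{l..r}. (\<Sum>k<n. w k (j - 1)) = 1" "\<forall>j\<in>{l..r}. (\<Sum>k<n. w k j) = 1"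
    using isometry_col_sqnorm[OF U(1)] assms(1,7) unfolding w_def by auto
  have n: "real (n - 1) = real n - 1" "card {l..r} = r - l + 1"
    using assms(1,6) by auto
  have "(\<Sum>k<n. \<Sum>j=l..r. mu (Suc k) j) \<le> (\<Sum>k<n. (\<Sum>j=l..r. (lam j - lam (r + 1))
      * (1 - w k (j - 1))) + real (card {l..r}) * lam (r + 1))"
    by (rule sum_mono) (use upper_k in simp)
  then have upper: "(\<Sum>k<n. \<Sum>j=l..r. mu (Suc k) j)
      \<le> real (n - 1) * (\<Sum>j=l..r. lam j) + real (r - l + 1) * lam (r + 1)"
    using sum_window_average[where S="{l..r}" and w="\<lambda>k j. w k (j - 1)"] cols(1) n by simp
  have "real (r - l + 1) * lam l + real (n - 1) * (\<Sum>j=l..r. lam (j + 1))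
      = (\<Sum>k<n. (\<Sum>j=l..r. (lam (j + 1) - lam l) * (1 - w k j)) + real (card {l..r}) * lam l)"
    using sum_window_average[where S="{l..r}" and w=w] cols(2) n by simp
  also have "\<dots> \<le> (\<Sum>k<n. \<Sum>j=l..r. mu (Suc k) j)"
    by (rule sum_mono) (use lower_k in simp)
  finally show ?thesis
    using upper by (simp add: sum.atLeast1_atMost_eq)
qed

end
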